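(* Let $F(x,y_0,y_1,\ldots,y_n)$ be holomorphic in a neighbourhood of $0\in\mathbb{C}^{n+2}$ with $F(0)=0$, and let $\varphi\in\mathcal{D}$. Then $F(x,\varphi,\delta\varphi,\ldots,\delta^n\varphi)\in\mathcal{D}$.
   Context: $\mathcal{D}$ is the ring of formal Dulac series $\sum_{k\ge1}c_k(t)x^{\lambda_k}$ with $t=\ln x$, $c_k\in\mathbb{C}[t]$, $\lambda_k\in\mathbb{C}$, $0<\mathrm{Re}\,\lambda_1\le\mathrm{Re}\,\lambda_2\le\ldots\to\infty$ (sum of two such series: union of exponent sets; product: collect terms with equal exponents). The operator $\delta=x\,d/dx$ acts on $\mathcal{D}$ by $\delta\bigl(\sum c_k(t)x^{\lambda_k}\bigr)=\sum(\lambda_k+\tfrac{d}{dt})c_k(t)\,x^{\lambda_k}$. $F(x,\varphi,\ldots,\delta^n\varphi)$ means the formal sum $\sum_{d\ge1}F_d(x,\varphi,\ldots,\delta^n\varphi)$, where $F=\sum_{d\ge1}F_d$ is the expansion of $F$ into homogeneous polynomials $F_d$ of degree $d$; the claim includes that this sum is well defined (for each $N$ only finitely many terms contribute exponents with real part $<N$). *)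

theory Defs
  imports "HOL-Analysis.Analysis" "HOL-Computational_Algebra.Polynomial"
begin

text \<open>Formal Dulac series are represented by their coefficient function:
  a raw series c assigns to each exponent lam the polynomial coefficient
  c lam in C[t] (t = ln x).  The series is c_1(t) x^lam_1 + c_2(t) x^lam_2 + ...,
  summing over the exponents with nonzero coefficient.\<close>

type_synonym dser = "complex \<Rightarrow> complex poly"

definition is_dulac :: "dser \<Rightarrow> bool" where
  "is_dulac c \<longleftrightarrow> (\<forall>lam. c lam \<noteq> 0 \<longrightarrow> 0 < Re lam)
                   \<and> (\<forall>N::real. finite {lam. c lam \<noteq> 0 \<and> Re lam < N})"

definition dadd :: "dser \<Rightarrow> dser \<Rightarrow> dser" where
  "dadd c e = (\<lambda>lam. c lam + e lam)"

definition dmul :: "dser \<Rightarrow> dser \<Rightarrow> dser" where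
  "dmul c e = (\<lambda>lam. \<Sum>mu\<in>{mu. c mu \<noteq> 0 \<and> e (lam - mu) \<noteq> 0}. c mu * e (lam - mu))"

definition dscale :: "complex \<Rightarrow> dser \<Rightarrow> dser" where
  "dscale k c = (\<lambda>lam. smult k (c lam))"

definition dsum :: "'i set \<Rightarrow> ('i \<Rightarrow> dser) \<Rightarrow> dser" where
  "dsum S f = (\<lambda>lam. \<Sum>s\<in>S. f s lam)"

definition done_ser :: dser where
  "done_ser = (\<lambda>lam. if lam = 0 then 1 else 0)"

definition dx :: dser where
  "dx = (\<lambda>lam. if lam = 1 then 1 else 0)"

definition dpow :: "dser \<Rightarrow> nat \<Rightarrow> dser" where
  "dpow c k = (dmul c ^^ k) done_ser"

text \<open>delta = x d/dx : (lam + d/dt) c(t) x^lam.\<close>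

definition ddelta :: "dser \<Rightarrow> dser" where
  "ddelta c = (\<lambda>lam. smult lam (c lam) + pderiv (c lam))"

text \<open>Variables of F: index 0 is x, index i+1 is y_i (i = 0..n).  Multi-indices
  are functions nat \<Rightarrow> nat vanishing above n+1.\<close>

definition multi_idx :: "nat \<Rightarrow> (nat \<Rightarrow> nat) set" where
  "multi_idx n = {alpha. \<forall>i>n+1. alpha i = 0}"

definition mono :: "nat \<Rightarrow> (nat \<Rightarrow> nat) \<Rightarrow> (nat \<Rightarrow> complex) \<Rightarrow> complex" where
  "mono n alpha y = (\<Prod>i\<le>n+1. y i ^ alpha i)"

definition holo_near0_coeffs ::
  "nat \<Rightarrow> ((nat \<Rightarrow> complex) \<Rightarrow> complex) \<Rightarrow> ((nat \<Rightarrow> nat) \<Rightarrow> complex) \<Rightarrow> bool" where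
  "holo_near0_coeffs n F a \<longleftrightarrow>
     (\<exists>r>0. \<forall>y. (\<forall>i\<le>n+1. norm (y i) < r) \<longrightarrow>
        ((\<lambda>alpha. a alpha * mono n alpha y) has_sum F y) (multi_idx n))"

definition dmono :: "nat \<Rightarrow> (nat \<Rightarrow> nat) \<Rightarrow> (nat \<Rightarrow> dser) \<Rightarrow> dser" where
  "dmono n alpha args = foldr (\<lambda>i acc. dmul (dpow (args i) (alpha i)) acc) [0..<n+2] done_ser"

definition subst_args :: "dser \<Rightarrow> nat \<Rightarrow> dser" where
  "subst_args phi i = (if i = 0 then dx else (ddelta ^^ (i - 1)) phi)"

definition Fd_subst :: "nat \<Rightarrow> ((nat \<Rightarrow> nat) \<Rightarrow> complex) \<Rightarrow> dser \<Rightarrow> nat \<Rightarrow> dser" where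
  "Fd_subst n a phi d =
     dsum {alpha \<in> multi_idx n. (\<Sum>i\<le>n+1. alpha i) = d}
          (\<lambda>alpha. dscale (a alpha) (dmono n alpha (subst_args phi)))"

end

theory Submission
  imports Defs
begin

text \<open>Choose m > 0 below every exponent of phi and with m \<le> 1. Then x and all
  delta^k phi have exponents of real part \<ge> m, so every monomial of total degree d
  in them, and hence F_d(x, phi, ..., delta^n phi), has exponents of real part
  \<ge> d m. Below any bound N only finitely many degrees d contribute, and each
  contributes finitely many exponents.\<close>

definition order_ge :: "real \<Rightarrow> dser \<Rightarrow> bool" where
  "order_ge m c \<longleftrightarrow> (\<forall>lam. c lam \<noteq> 0 \<longrightarrow> m \<le> Re lam)
                   \<and> (\<forall>N::real. finite {lam. c lam \<noteq> 0 \<and> Re lam < N})"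

lemma order_ge_mono: "m' \<le> m \<Longrightarrow> order_ge m c \<Longrightarrow> order_ge m' c"
  unfolding order_ge_def by force

lemma order_ge_support_subset:
  assumes "order_ge m c" and "\<And>lam. c lam = 0 \<Longrightarrow> e lam = 0"
  shows "order_ge m e"
proof -
  have "{lam. e lam \<noteq> 0 \<and> Re lam < N} \<subseteq> {lam. c lam \<noteq> 0 \<and> Re lam < N}" for N
    using assms(2) by blast
  then show ?thesis
    using assms unfolding order_ge_def by (meson finite_subset)
qed

lemma is_dulac_iff_order_ge: "is_dulac c \<longleftrightarrow> (\<exists>m>0. order_ge m c)"
proof
  assume dulac: "is_dulac c"
  define S where "S = {lam. c lam \<noteq> 0 \<and> Re lam < 1}"
  have "finite S" and S_pos: "\<And>lam. lam \<in> S \<Longrightarrow> 0 < Re lam"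
    using dulac by (auto simp: is_dulac_def S_def)
  define m where "m = Min (insert 1 (Re ` S))"
  have "m \<in> insert 1 (Re ` S)"
    unfolding m_def using \<open>finite S\<close> by (intro Min_in) auto
  then have "m > 0" using S_pos by auto
  moreover have "m \<le> Re lam" if "c lam \<noteq> 0" for lam
  proof (cases "Re lam < 1")
    case True
    then have "lam \<in> S" using that by (simp add: S_def)
    then show ?thesis unfolding m_def using \<open>finite S\<close> by (intro Min_le) auto
  next
    case False
    have "m \<le> 1" unfolding m_def using \<open>finite S\<close> by (intro Min_le) auto
    with False show ?thesis by linarith
  qed
  ultimately show "\<exists>m>0. order_ge m c"
    using dulac unfolding is_dulac_def order_ge_def by blast
next
  assume "\<exists>m>0. order_ge m c"
  then show "is_dulac c"
    unfolding is_dulac_def order_ge_def by force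
qed

lemma order_ge_done_ser: "order_ge 0 done_ser"
proof -
  have "{lam. done_ser lam \<noteq> 0 \<and> Re lam < N} \<subseteq> {0}" for N
    by (auto simp: done_ser_def)
  then show ?thesis
    unfolding order_ge_def by (auto simp: done_ser_def intro: finite_subset)
qed

lemma order_ge_dx: "order_ge 1 dx"
proof -
  have "{lam. dx lam \<noteq> 0 \<and> Re lam < N} \<subseteq> {1}" for N
    by (auto simp: dx_def)
  then show ?thesis
    unfolding order_ge_def by (auto simp: dx_def intro: finite_subset)
qed

lemma dmul_nonzero_split:
  assumes "dmul c e lam \<noteq> 0"
  obtains mu where "c mu \<noteq> 0" and "e (lam - mu) \<noteq> 0"
  using assms sum.not_neutral_contains_not_neutral unfolding dmul_def by blast

text \<open>Exponents of a product lie in the sumset of the exponents of the factors.\<close>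

lemma order_ge_dmul:
  assumes c: "order_ge m1 c" and e: "order_ge m2 e"
  shows "order_ge (m1 + m2) (dmul c e)"
  unfolding order_ge_def
proof safe
  fix lam assume "dmul c e lam \<noteq> 0"
  then obtain mu where "c mu \<noteq> 0" "e (lam - mu) \<noteq> 0" by (rule dmul_nonzero_split)
  then have "m1 \<le> Re mu" "m2 \<le> Re (lam - mu)" using c e unfolding order_ge_def by auto
  then show "m1 + m2 \<le> Re lam" by simp
next
  fix N
  let ?A = "{u. c u \<noteq> 0 \<and> Re u < N - m2}" and ?B = "{v. e v \<noteq> 0 \<and> Re v < N - m1}"
  have "{lam. dmul c e lam \<noteq> 0 \<and> Re lam < N} \<subseteq> (\<lambda>(u, v). u + v) ` (?A \<times> ?B)"
  proof safe
    fix lam assume "dmul c e lam \<noteq> 0" "Re lam < N"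
    moreover obtain mu where "c mu \<noteq> 0" "e (lam - mu) \<noteq> 0"
      using \<open>dmul c e lam \<noteq> 0\<close> by (rule dmul_nonzero_split)
    moreover have "m1 \<le> Re mu" "m2 \<le> Re (lam - mu)"
      using calculation c e unfolding order_ge_def by auto
    ultimately have "(mu, lam - mu) \<in> ?A \<times> ?B" by auto
    then show "lam \<in> (\<lambda>(u, v). u + v) ` (?A \<times> ?B)" by force
  qed
  moreover have "finite (?A \<times> ?B)" using c e unfolding order_ge_def by auto
  ultimately show "finite {lam. dmul c e lam \<noteq> 0 \<and> Re lam < N}"
    by (meson finite_imageI finite_subset)
qed

lemma order_ge_dpow: "order_ge m c \<Longrightarrow> order_ge (real k * m) (dpow c k)"
proof (induction k)
  case 0
  then show ?case by (simp add: dpow_def order_ge_done_ser)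
next
  case (Suc k)
  have "order_ge (m + real k * m) (dmul c (dpow c k))"
    using order_ge_dmul[OF Suc.prems Suc.IH[OF Suc.prems]] .
  then show ?case by (simp add: dpow_def algebra_simps)
qed

lemma order_ge_ddelta_pow: "order_ge m c \<Longrightarrow> order_ge m ((ddelta ^^ k) c)"
proof (induction k)
  case (Suc k)
  then show ?case
    by (auto simp: ddelta_def elim: order_ge_support_subset)
qed simp

lemma order_ge_dscale: "order_ge m c \<Longrightarrow> order_ge m (dscale k c)"
  by (erule order_ge_support_subset) (simp add: dscale_def)

lemma order_ge_dadd:
  assumes c: "order_ge m c" and e: "order_ge m e"
  shows "order_ge m (dadd c e)"
proof -
  have "{lam. dadd c e lam \<noteq> 0 \<and> Re lam < N}
      \<subseteq> {lam. c lam \<noteq> 0 \<and> Re lam < N} \<union> {lam. e lam \<noteq> 0 \<and> Re lam < N}" for N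
    by (auto simp: dadd_def)
  with c e show ?thesis
    unfolding order_ge_def dadd_def by (metis (no_types, lifting) add.right_neutral
        add_0 finite_Un finite_subset)
qed

lemma order_ge_dsum:
  "finite S \<Longrightarrow> (\<And>s. s \<in> S \<Longrightarrow> order_ge m (f s)) \<Longrightarrow> order_ge m (dsum S f)"
proof (induction S rule: finite_induct)
  case empty
  then show ?case by (simp add: dsum_def order_ge_def)
next
  case (insert s S)
  then have "dsum (insert s S) f = dadd (f s) (dsum S f)"
    by (simp add: dsum_def dadd_def fun_eq_iff)
  then show ?case using insert order_ge_dadd by simp
qed

lemma order_ge_dmono:
  assumes "\<And>i. order_ge m (args i)"
  shows "order_ge (real (\<Sum>i\<le>n+1. alpha i) * m) (dmono n alpha args)"
proof -
  have "order_ge (real (sum_list (map alpha xs)) * m)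
      (foldr (\<lambda>i acc. dmul (dpow (args i) (alpha i)) acc) xs done_ser)" for xs
  proof (induction xs)
    case Nil
    then show ?case by (simp add: order_ge_done_ser)
  next
    case (Cons i xs)
    show ?case
      using order_ge_dmul[OF order_ge_dpow[OF assms] Cons.IH] by (simp add: algebra_simps)
  qed
  moreover have "sum_list (map alpha [0..<n+2]) = (\<Sum>i\<le>n+1. alpha i)"
    by (simp add: sum_list_distinct_conv_sum_set atLeast0AtMost
        atLeastLessThanSuc_atLeastAtMost del: upt_Suc)
  ultimately show ?thesis unfolding dmono_def by metis
qed

lemma finite_multi_idx_degree: "finite {alpha \<in> multi_idx n. (\<Sum>i\<le>n+1. alpha i) = d}"
proof (rule finite_subset)
  show "{alpha \<in> multi_idx n. (\<Sum>i\<le>n+1. alpha i) = d}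
      \<subseteq> {alpha. \<forall>i. (i \<in> {..n+1} \<longrightarrow> alpha i \<in> {..d}) \<and> (i \<notin> {..n+1} \<longrightarrow> alpha i = 0)}"
    using member_le_sum[of _ "{..n+1}"] by (auto simp: multi_idx_def simp del: sum.atMost_Suc)
  show "finite {alpha. \<forall>i. (i \<in> {..n+1} \<longrightarrow> alpha i \<in> {..d}) \<and> (i \<notin> {..n+1} \<longrightarrow> alpha i = 0)}"
    by (rule finite_set_of_finite_funs) auto
qed

lemma order_ge_subst_args:
  "order_ge m phi \<Longrightarrow> m \<le> 1 \<Longrightarrow> order_ge m (subst_args phi i)"
  using order_ge_mono[OF _ order_ge_dx] order_ge_ddelta_pow by (simp add: subst_args_def)

lemma order_ge_Fd_subst:
  assumes "order_ge m phi" and "m \<le> 1"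
  shows "order_ge (real d * m) (Fd_subst n a phi d)"
  unfolding Fd_subst_def
proof (rule order_ge_dsum[OF finite_multi_idx_degree])
  fix alpha assume "alpha \<in> {alpha \<in> multi_idx n. (\<Sum>i\<le>n+1. alpha i) = d}"
  then show "order_ge (real d * m) (dscale (a alpha) (dmono n alpha (subst_args phi)))"
    using order_ge_dscale[OF order_ge_dmono[OF order_ge_subst_args[OF assms]]] by auto
qed

lemma finite_degrees_below:
  assumes "m > 0" and "\<And>d. order_ge (real d * m) (f d)"
  shows "finite {d::nat. d \<ge> 1 \<and> (\<exists>lam. Re lam < N \<and> f d lam \<noteq> 0)}"
proof (rule finite_subset)
  show "{d. d \<ge> 1 \<and> (\<exists>lam. Re lam < N \<and> f d lam \<noteq> 0)} \<subseteq> {..nat \<lceil>N / m\<rceil>}"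
  proof safe
    fix d lam assume "Re lam < N" "f d lam \<noteq> 0"
    then have "real d * m < N" using assms(2)[of d] unfolding order_ge_def by force
    then have "real d < N / m" using \<open>m > 0\<close> by (simp add: field_simps)
    then show "d \<le> nat \<lceil>N / m\<rceil>" by linarith
  qed
qed simp

lemma is_dulac_degree_sum:
  assumes "m > 0" and f: "\<And>d. order_ge (real d * m) (f d)"
  shows "is_dulac (\<lambda>lam. \<Sum>d\<in>{d::nat. d \<ge> 1 \<and> f d lam \<noteq> 0}. f d lam)"
    (is "is_dulac ?G")
proof -
  have some_degree: "\<exists>d\<ge>1. f d lam \<noteq> 0" if "?G lam \<noteq> 0" for lam
    using sum.not_neutral_contains_not_neutral[OF that] by blast
  show ?thesis unfolding is_dulac_def
  proof safe
    fix lam assume "?G lam \<noteq> 0"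
    then obtain d where "d \<ge> 1" "f d lam \<noteq> 0" using some_degree by blast
    then have "real d * m \<le> Re lam" using f[of d] unfolding order_ge_def by blast
    moreover have "m \<le> real d * m" using \<open>d \<ge> 1\<close> \<open>m > 0\<close> by simp
    ultimately show "0 < Re lam" using \<open>m > 0\<close> by linarith
  next
    fix N
    let ?D = "{d::nat. d \<ge> 1 \<and> (\<exists>lam. Re lam < N \<and> f d lam \<noteq> 0)}"
    have "{lam. ?G lam \<noteq> 0 \<and> Re lam < N} \<subseteq> (\<Union>d\<in>?D. {lam. f d lam \<noteq> 0 \<and> Re lam < N})"
      using some_degree by blast
    moreover have "finite (\<Union>d\<in>?D. {lam. f d lam \<noteq> 0 \<and> Re lam < N})"
      using finite_degrees_below[OF assms] f unfolding order_ge_def by blast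
    ultimately show "finite {lam. ?G lam \<noteq> 0 \<and> Re lam < N}" by (rule finite_subset)
  qed
qed

theorem lemma1:
  fixes n :: nat
    and F :: "(nat \<Rightarrow> complex) \<Rightarrow> complex"
    and a :: "(nat \<Rightarrow> nat) \<Rightarrow> complex"
    and phi :: dser
  assumes "holo_near0_coeffs n F a"
    and "F (\<lambda>_. 0) = 0"
    and "is_dulac phi"
  shows "(\<forall>N::real. finite {d::nat. d \<ge> 1 \<and> (\<exists>lam. Re lam < N \<and> Fd_subst n a phi d lam \<noteq> 0)})
       \<and> is_dulac (\<lambda>lam. \<Sum>d\<in>{d::nat. d \<ge> 1 \<and> Fd_subst n a phi d lam \<noteq> 0}. Fd_subst n a phi d lam)"
proof -
  obtain m where "m > 0" and "order_ge m phi"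
    using \<open>is_dulac phi\<close> is_dulac_iff_order_ge by blast
  then have "min m 1 > 0" and "order_ge (min m 1) phi"
    using order_ge_mono[OF min.cobounded1] by auto
  then have "order_ge (real d * min m 1) (Fd_subst n a phi d)" for d
    by (intro order_ge_Fd_subst) auto
  with \<open>min m 1 > 0\<close> show ?thesis
    using finite_degrees_below is_dulac_degree_sum by blast
qed

end
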